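(* Let $G$ be a group and $X$ a conjugacy class of $G$ that generates $G$. Assume there is a rack isomorphism $\varphi:\operatorname{Aff}(p,\alpha)\to X$ for some prime $p$ and some $\alpha\in\mathbb{Z}/p\mathbb{Z}\setminus\{0,1\}$. For $i\in\mathbb{Z}/p\mathbb{Z}$ put $g_i=\varphi(i)$, and put $\gamma=g_0g_1^{-1}$. Then: (1) For all $x,y,z\in\mathbb{Z}/p\mathbb{Z}$ and all integers $k\ge0$: $g_xg_y^{-1}=g_{x+z}g_{y+z}^{-1}$, $g_0g_k^{-1}=\gamma^k$ (with $k$ read modulo $p$ in the index), and $g_x\gamma=\gamma^{\alpha}g_x$ (with $\alpha$ represented by any integer). (2) The derived subgroup $[G,G]$ is cyclic of order $p$ and generated by $\gamma$.
   Context: A rack is a set with a binary operation $\triangleright$ such that each left multiplication $y\mapsto x\triangleright y$ is bijective and $x\triangleright(y\triangleright z)=(x\triangleright y)\triangleright(x\triangleright z)$. A conjugacy class $X$ is a rack with $x\triangleright y=xyx^{-1}$. $\operatorname{Aff}(p,\alpha)$ is the rack $\mathbb{Z}/p\mathbb{Z}$ with $i\triangleright j=(1-\alpha)i+\alpha j$. *)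

theory Defs
  imports "HOL-Algebra.Algebra"
begin

text \<open>The affine rack Aff(p, alpha): carrier Z/pZ represented as {0..<p} :: int set,
  with i |> j = (1 - alpha) i + alpha j (mod p).\<close>
definition aff_op :: "int \<Rightarrow> int \<Rightarrow> int \<Rightarrow> int \<Rightarrow> int" where
  "aff_op p \<alpha> i j = ((1 - \<alpha>) * i + \<alpha> * j) mod p"

definition conj_class :: "('a, 'b) monoid_scheme \<Rightarrow> 'a \<Rightarrow> 'a set" where
  "conj_class G x = {monoid.mult G (monoid.mult G g x) (m_inv G g) | g. g \<in> carrier G}"

definition aff_rack_iso :: "('a, 'b) monoid_scheme \<Rightarrow> int \<Rightarrow> int \<Rightarrow> (int \<Rightarrow> 'a) \<Rightarrow> 'a set \<Rightarrow> bool" where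
  "aff_rack_iso G p a f C \<longleftrightarrow>
     bij_betw f {0..<p} C \<and>
     (\<forall>i\<in>{0..<p}. \<forall>j\<in>{0..<p}.
        f (aff_op p a i j) = monoid.mult G (monoid.mult G (f i) (f j)) (m_inv G (f i)))"

end

theory Submission
  imports Defs "HOL-Algebra.Multiplicative_Group" "HOL-Number_Theory.Cong"
begin

text \<open>Conjugation by \<open>g\<^sub>x\<close> acts on the indices as \<open>i \<mapsto> (1 - \<alpha>) x + \<alpha> i\<close>, so
  \<open>\<delta>\<^sub>x = g\<^sub>0 g\<^sub>x\<^sup>-\<^sup>1\<close> acts on \<open>X\<close> as the translation by \<open>(\<alpha> - 1) x\<close>. As \<open>X\<close> generates \<open>G\<close>,
  an element acting trivially on \<open>X\<close> is central; comparing \<open>\<delta>\<^sub>x\<close> with \<open>\<gamma>\<^sup>x\<close> shows that the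
  \<open>\<delta>\<^sub>x\<close> commute, and then conjugating \<open>\<delta>\<^sub>u\<close> by \<open>\<delta>\<^sub>x\<close> gives \<open>\<delta>\<^sub>u\<^sub>+\<^sub>w = \<delta>\<^sub>u \<delta>\<^sub>w\<close>, because
  \<open>\<alpha> - 1\<close> is invertible modulo \<open>p\<close>. Hence \<open>g\<^sub>a g\<^sub>b\<^sup>-\<^sup>1 = \<gamma>\<^bsup>b - a\<^esup>\<close>, from which (1) follows and
  \<open>\<gamma>\<^sup>p = 1 \<noteq> \<gamma>\<close>. Since \<open>X\<close> is closed under conjugation, \<open>\<langle>\<gamma>\<rangle>\<close> is normal and contains every
  commutator \<open>[h, g\<^sub>b] = g\<^sub>a g\<^sub>b\<^sup>-\<^sup>1\<close>, so \<open>G/\<langle>\<gamma>\<rangle>\<close> is abelian; conversely \<open>\<gamma>\<close> is a commutator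
  because \<open>g\<^sub>0\<close> and \<open>g\<^sub>1\<close> are conjugate.\<close>

lemma (in group) mult_inv_cancel_left [simp]:
  "x \<in> carrier G \<Longrightarrow> y \<in> carrier G \<Longrightarrow> x \<otimes> (inv x \<otimes> y) = y"
  by (simp add: m_assoc [symmetric])

lemma (in group) inv_mult_cancel_left [simp]:
  "x \<in> carrier G \<Longrightarrow> y \<in> carrier G \<Longrightarrow> inv x \<otimes> (x \<otimes> y) = y"
  by (simp add: m_assoc [symmetric])

lemma (in group) conj_class_subset_carrier:
  "x \<in> carrier G \<Longrightarrow> conj_class G x \<subseteq> carrier G"
  unfolding conj_class_def by auto

lemma (in group) conj_class_conj_closed:
  assumes "x \<in> carrier G" "u \<in> conj_class G x" "h \<in> carrier G"
  shows "h \<otimes> u \<otimes> inv h \<in> conj_class G x"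
proof -
  obtain k where k: "k \<in> carrier G" "u = k \<otimes> x \<otimes> inv k"
    using assms(2) unfolding conj_class_def by auto
  have "h \<otimes> u \<otimes> inv h = (h \<otimes> k) \<otimes> x \<otimes> inv (h \<otimes> k)"
    using assms(1,3) k by (simp add: m_assoc inv_mult_group)
  then show ?thesis
    using assms(3) k(1) unfolding conj_class_def by blast
qed

lemma (in group) commutator_in_derived:
  "g \<in> carrier G \<Longrightarrow> h \<in> carrier G \<Longrightarrow> g \<otimes> h \<otimes> inv g \<otimes> inv h \<in> derived G (carrier G)"
  unfolding derived_def by (rule generate.incl) blast

lemma (in group) conj_class_div_in_derived:
  assumes "x \<in> carrier G" "u \<in> conj_class G x" "v \<in> conj_class G x"
  shows "u \<otimes> inv v \<in> derived G (carrier G)"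
proof -
  obtain a b where a: "a \<in> carrier G" "u = a \<otimes> x \<otimes> inv a"
    and b: "b \<in> carrier G" "v = b \<otimes> x \<otimes> inv b"
    using assms(2,3) unfolding conj_class_def by auto
  \<comment> \<open>\<open>v = k u k\<^sup>-\<^sup>1\<close>, so \<open>u v\<^sup>-\<^sup>1\<close> is a commutator.\<close>
  define k where "k = b \<otimes> inv a"
  have "u \<otimes> inv v = u \<otimes> k \<otimes> inv u \<otimes> inv k"
    unfolding a(2) b(2) k_def using assms(1) a(1) b(1) by (simp add: m_assoc inv_mult_group)
  moreover have "u \<otimes> k \<otimes> inv u \<otimes> inv k \<in> derived G (carrier G)"
    using a b assms(1) by (simp add: k_def commutator_in_derived)
  ultimately show ?thesis by simp
qed

lemma (in group) commutes_with_generate: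
  assumes "S \<subseteq> carrier G" "h \<in> carrier G" "\<And>s. s \<in> S \<Longrightarrow> h \<otimes> s = s \<otimes> h"
    and "y \<in> generate G S"
  shows "h \<otimes> y = y \<otimes> h"
  using assms(4)
proof (induction rule: generate.induct)
  case one
  then show ?case using assms(2) by simp
next
  case (incl s)
  then show ?case using assms(3) by blast
next
  case (inv s)
  have s: "s \<in> carrier G" using inv assms(1) by blast
  have "h \<otimes> inv s = inv s \<otimes> (s \<otimes> h) \<otimes> inv s"
    using s assms(2) by (simp add: m_assoc)
  also have "\<dots> = inv s \<otimes> (h \<otimes> s) \<otimes> inv s"
    by (simp only: assms(3)[OF inv])
  also have "\<dots> = inv s \<otimes> h"
    using s assms(2) by (simp add: m_assoc)
  finally show ?case .
next
  case (eng y z)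
  have "y \<in> carrier G" "z \<in> carrier G"
    using eng.hyps generate_in_carrier[OF assms(1)] by auto
  then show ?case
    using assms(2) by (metis eng.IH m_assoc)
qed

lemma (in group) derived_subset_normal:
  assumes N: "N \<lhd> G" and S: "S \<subseteq> carrier G" "generate G S = carrier G"
    and comm: "\<And>s h. s \<in> S \<Longrightarrow> h \<in> carrier G \<Longrightarrow> h \<otimes> s \<otimes> inv h \<otimes> inv s \<in> N"
  shows "derived G (carrier G) \<subseteq> N"
proof -
  interpret N: normal N G by (rule N)
  have "\<forall>h\<in>carrier G. h \<otimes> y \<otimes> inv h \<otimes> inv y \<in> N" if "y \<in> generate G S" for y
    using that
  proof (induction rule: generate.induct)
    case one
    then show ?case by simp
  next
    case (incl s)
    then show ?case using comm by blast
  next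
    case (inv s)
    have s: "s \<in> carrier G" using inv S(1) by blast
    show ?case
    proof
      fix h assume h: "h \<in> carrier G"
      have "h \<otimes> inv s \<otimes> inv h \<otimes> inv (inv s) = inv s \<otimes> inv (h \<otimes> s \<otimes> inv h \<otimes> inv s) \<otimes> s"
        using s h by (simp add: m_assoc inv_mult_group)
      moreover have "inv s \<otimes> inv (h \<otimes> s \<otimes> inv h \<otimes> inv s) \<otimes> s \<in> N"
        using N.inv_op_closed1[OF s N.m_inv_closed[OF comm[OF inv h]]] .
      ultimately show "h \<otimes> inv s \<otimes> inv h \<otimes> inv (inv s) \<in> N" by simp
    qed
  next
    case (eng y z)
    have yz: "y \<in> carrier G" "z \<in> carrier G"
      using eng.hyps generate_in_carrier[OF S(1)] by auto
    show ?case
    proof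
      fix h assume h: "h \<in> carrier G"
      have "h \<otimes> (y \<otimes> z) \<otimes> inv h \<otimes> inv (y \<otimes> z) =
            (h \<otimes> y \<otimes> inv h \<otimes> inv y) \<otimes> (y \<otimes> (h \<otimes> z \<otimes> inv h \<otimes> inv z) \<otimes> inv y)"
        using yz h by (simp add: m_assoc inv_mult_group)
      then show "h \<otimes> (y \<otimes> z) \<otimes> inv h \<otimes> inv (y \<otimes> z) \<in> N"
        using eng.IH h yz by (simp add: N.inv_op_closed2)
    qed
  qed
  then show ?thesis
    unfolding derived_def using S(2)
    by (intro generate_subgroup_incl[OF _ N.subgroup_axioms]) auto
qed

lemma prime_invertible_mod:
  fixes p a :: int
  assumes "Factorial_Ring.prime p" "\<not> p dvd a"
  shows "\<exists>b. [a * b = 1] (mod p)"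
  using assms by (metis cong_solve_coprime_int prime_imp_coprime coprime_commute)

locale aff_conj_class = group G for G (structure) +
  fixes C :: "'a set" and p \<alpha> :: int and \<phi> :: "int \<Rightarrow> 'a" and \<gamma> :: 'a
  assumes C_conj_class: "\<exists>x\<in>carrier G. C = conj_class G x"
    and C_generates: "generate G C = carrier G"
    and p_prime: "Factorial_Ring.prime p"
    and alpha_range: "\<alpha> \<in> {0..<p} - {0, 1}"
    and aff_iso: "aff_rack_iso G p \<alpha> \<phi> C"
    and gamma_def: "\<gamma> = \<phi> 0 \<otimes> inv (\<phi> 1)"
begin

text \<open>\<open>elt i\<close> is \<open>g\<^sub>i\<close> with the index read modulo \<open>p\<close>, so that index arithmetic can be done in \<open>\<int>\<close>.\<close>

definition elt :: "int \<Rightarrow> 'a" where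
  "elt i = \<phi> (i mod p)"

lemma p_gt_1: "p > 1"
  using p_prime by (simp add: prime_int_iff)

lemma elt_cong: "[i = j] (mod p) \<Longrightarrow> elt i = elt j"
  unfolding elt_def cong_def by simp

lemma elt_eq_phi: "i \<in> {0..<p} \<Longrightarrow> elt i = \<phi> i"
  unfolding elt_def by simp

lemma phi_in_C: "x \<in> {0..<p} \<Longrightarrow> \<phi> x \<in> C"
  using aff_iso unfolding aff_rack_iso_def bij_betw_def by blast

lemma range_elt: "range elt = C"
proof -
  have C: "\<phi> ` {0..<p} = C"
    using aff_iso unfolding aff_rack_iso_def bij_betw_def by blast
  have "elt i \<in> C" for i
    unfolding elt_def C[symmetric] using p_gt_1 by simp
  moreover have "c \<in> range elt" if c: "c \<in> C" for c
  proof -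
    obtain i where "i \<in> {0..<p}" "c = \<phi> i"
      using c unfolding C[symmetric] by blast
    then show ?thesis
      using elt_eq_phi by (metis rangeI)
  qed
  ultimately show ?thesis by blast
qed

lemma C_subset_carrier: "C \<subseteq> carrier G"
  using C_conj_class conj_class_subset_carrier by blast

lemma elt_in_carrier [simp]: "elt i \<in> carrier G"
  using range_elt C_subset_carrier by blast

lemma conj_elt: "h \<in> carrier G \<Longrightarrow> \<exists>j. h \<otimes> elt i \<otimes> inv h = elt j"
proof -
  assume h: "h \<in> carrier G"
  obtain x where "x \<in> carrier G" "C = conj_class G x"
    using C_conj_class by blast
  then have "h \<otimes> elt i \<otimes> inv h \<in> range elt"
    using conj_class_conj_closed[OF _ _ h] range_elt by (metis rangeI)
  then show ?thesis by blast
qed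

lemma elt_rack: "elt i \<otimes> elt j \<otimes> inv (elt i) = elt ((1 - \<alpha>) * i + \<alpha> * j)"
proof -
  have "i mod p \<in> {0..<p}" "j mod p \<in> {0..<p}"
    using p_gt_1 by auto
  then have "elt i \<otimes> elt j \<otimes> inv (elt i) = elt ((1 - \<alpha>) * (i mod p) + \<alpha> * (j mod p))"
    using aff_iso unfolding aff_rack_iso_def aff_op_def elt_def by auto
  also have "\<dots> = elt ((1 - \<alpha>) * i + \<alpha> * j)"
    by (intro elt_cong cong_add cong_mult) (simp_all add: cong_def)
  finally show ?thesis .
qed

lemma alpha_invertible: "\<exists>\<beta>. [\<alpha> * \<beta> = 1] (mod p)"
  using alpha_range p_prime zdvd_not_zless[of \<alpha> p] by (intro prime_invertible_mod) auto

lemma alpha_minus_one_invertible: "\<exists>\<beta>. [(\<alpha> - 1) * \<beta> = 1] (mod p)"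
  using alpha_range p_prime zdvd_not_zless[of "\<alpha> - 1" p] by (intro prime_invertible_mod) auto

lemma elt_conj_inv:
  assumes "[\<alpha> * \<beta> = 1] (mod p)"
  shows "inv (elt x) \<otimes> elt i \<otimes> elt x = elt (\<beta> * (i - (1 - \<alpha>) * x))"
proof -
  have "[(1 - \<alpha>) * x + \<alpha> * (\<beta> * (i - (1 - \<alpha>) * x)) = (1 - \<alpha>) * x + 1 * (i - (1 - \<alpha>) * x)] (mod p)"
    by (intro cong_add cong_refl) (use cong_mult[OF assms cong_refl] in \<open>simp add: mult.assoc\<close>)
  then have "elt x \<otimes> elt (\<beta> * (i - (1 - \<alpha>) * x)) \<otimes> inv (elt x) = elt i"
    unfolding elt_rack by (auto intro: elt_cong)
  then have "inv (elt x) \<otimes> elt i \<otimes> elt x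
      = inv (elt x) \<otimes> (elt x \<otimes> elt (\<beta> * (i - (1 - \<alpha>) * x)) \<otimes> inv (elt x)) \<otimes> elt x"
    by simp
  also have "\<dots> = elt (\<beta> * (i - (1 - \<alpha>) * x))"
    by (simp add: m_assoc)
  finally show ?thesis .
qed

definition shifts :: "'a \<Rightarrow> int \<Rightarrow> bool" where
  "shifts h s \<longleftrightarrow> h \<in> carrier G \<and> (\<forall>i. h \<otimes> elt i \<otimes> inv h = elt (i + s))"

lemma shifts_one: "shifts \<one> 0"
  unfolding shifts_def by simp

lemma shifts_mult:
  assumes "shifts h s" "shifts k t"
  shows "shifts (h \<otimes> k) (s + t)"
  unfolding shifts_def
proof (intro conjI allI)
  have hc: "h \<in> carrier G" and kc: "k \<in> carrier G"
    using assms unfolding shifts_def by simp_all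
  then show "h \<otimes> k \<in> carrier G" by simp
  fix i
  have k: "k \<otimes> elt i \<otimes> inv k = elt (i + t)"
    and h: "h \<otimes> elt (i + t) \<otimes> inv h = elt (i + t + s)"
    using assms unfolding shifts_def by blast+
  have "h \<otimes> k \<otimes> elt i \<otimes> inv (h \<otimes> k) = h \<otimes> (k \<otimes> elt i \<otimes> inv k) \<otimes> inv h"
    using hc kc by (simp add: m_assoc inv_mult_group)
  also have "\<dots> = elt (i + (s + t))"
    unfolding k h by (simp add: ac_simps)
  finally show "h \<otimes> k \<otimes> elt i \<otimes> inv (h \<otimes> k) = elt (i + (s + t))" .
qed

lemma shifts_inv:
  assumes "shifts h s"
  shows "shifts (inv h) (- s)"
  unfolding shifts_def
proof (intro conjI allI)
  have h: "h \<in> carrier G"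
    using assms unfolding shifts_def by simp
  then show "inv h \<in> carrier G" by simp
  fix i
  have "elt i = h \<otimes> elt (i - s) \<otimes> inv h"
    using assms unfolding shifts_def by simp
  then have "inv h \<otimes> elt i \<otimes> inv (inv h) = inv h \<otimes> (h \<otimes> elt (i - s) \<otimes> inv h) \<otimes> h"
    using h by simp
  also have "\<dots> = elt (i + - s)"
    using h by (simp add: m_assoc)
  finally show "inv h \<otimes> elt i \<otimes> inv (inv h) = elt (i + - s)" .
qed

lemma shifts_nat_pow: "shifts h s \<Longrightarrow> shifts (h [^] n) (int n * s)"
proof (induction n)
  case 0
  then show ?case using shifts_one by simp
next
  case (Suc n)
  then show ?case
    using shifts_mult[OF Suc.IH[OF Suc.prems] Suc.prems] by (simp add: algebra_simps)
qed

lemma shifts_int_pow: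
  assumes "shifts h s"
  shows "shifts (h [^] k) (k * s)"
proof -
  have h: "h \<in> carrier G"
    using assms unfolding shifts_def by simp
  show ?thesis
  proof (cases k rule: int_cases)
    case (nonneg n)
    then show ?thesis
      using shifts_nat_pow[OF assms] by (simp add: int_pow_int)
  next
    case (neg n)
    then have "h [^] k = inv (h [^] Suc n)"
      using int_pow_neg_int[OF h, of "Suc n"] by simp
    moreover have "k * s = - (int (Suc n) * s)"
      unfolding neg by (simp add: algebra_simps)
    ultimately show ?thesis
      using shifts_inv[OF shifts_nat_pow[OF assms, of "Suc n"]] by simp
  qed
qed

lemma shifts_zero_central:
  assumes "shifts h s" "[s = 0] (mod p)" "y \<in> carrier G"
  shows "h \<otimes> y = y \<otimes> h"
proof (rule commutes_with_generate[OF C_subset_carrier])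
  show h: "h \<in> carrier G"
    using assms(1) unfolding shifts_def by simp
  show "y \<in> generate G C"
    using assms(3) C_generates by simp
  fix c assume "c \<in> C"
  then obtain i where c: "c = elt i"
    using range_elt by blast
  have "elt (i + s) = elt i"
    using elt_cong cong_add[OF cong_refl assms(2), of i] by simp
  then have "h \<otimes> c \<otimes> inv h = c"
    using assms(1) unfolding c shifts_def by simp
  then show "h \<otimes> c = c \<otimes> h"
    using h c by (metis elt_in_carrier inv_solve_right m_closed)
qed

definition delta :: "int \<Rightarrow> 'a" where
  "delta x = elt 0 \<otimes> inv (elt x)"

lemma delta_in_carrier [simp]: "delta x \<in> carrier G"
  unfolding delta_def by simp

lemma delta_cong: "[x = y] (mod p) \<Longrightarrow> delta x = delta y"
  unfolding delta_def using elt_cong by simp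

lemma delta_zero [simp]: "delta 0 = \<one>"
  unfolding delta_def by simp

lemma gamma_eq_delta: "\<gamma> = delta 1"
  unfolding gamma_def delta_def using p_gt_1 by (simp add: elt_eq_phi)

lemma gamma_in_carrier [simp]: "\<gamma> \<in> carrier G"
  unfolding gamma_eq_delta by simp

lemma elt_div_eq_delta: "elt a \<otimes> inv (elt b) = inv (delta a) \<otimes> delta b"
  unfolding delta_def by (simp add: m_assoc inv_mult_group)

lemma shifts_delta: "shifts (delta x) ((\<alpha> - 1) * x)"
  unfolding shifts_def
proof (intro conjI allI)
  show "delta x \<in> carrier G" by simp
  obtain \<beta> where \<beta>: "[\<alpha> * \<beta> = 1] (mod p)"
    using alpha_invertible by blast
  fix i
  have "delta x \<otimes> elt i \<otimes> inv (delta x) = elt 0 \<otimes> (inv (elt x) \<otimes> elt i \<otimes> elt x) \<otimes> inv (elt 0)"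
    unfolding delta_def by (simp add: m_assoc inv_mult_group)
  also have "\<dots> = elt (\<alpha> * (\<beta> * (i - (1 - \<alpha>) * x)))"
    unfolding elt_conj_inv[OF \<beta>] elt_rack by simp
  also have "\<dots> = elt (i + (\<alpha> - 1) * x)"
    using cong_mult[OF \<beta> cong_refl[of "i - (1 - \<alpha>) * x"]]
    by (intro elt_cong) (simp add: mult.assoc algebra_simps)
  finally show "delta x \<otimes> elt i \<otimes> inv (delta x) = elt (i + (\<alpha> - 1) * x)" .
qed

text \<open>\<open>delta x\<close> and \<open>\<gamma> [^] x\<close> both shift by \<open>(\<alpha> - 1) x\<close>, so they differ by a central element.\<close>

lemma delta_commute: "delta x \<otimes> delta y = delta y \<otimes> delta x"
proof -
  define z where "z x = inv (\<gamma> [^] x) \<otimes> delta x" for x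
  have delta_eq: "delta x = \<gamma> [^] x \<otimes> z x" for x
    unfolding z_def by (simp add: m_assoc [symmetric])
  have z_central: "z x \<otimes> y = y \<otimes> z x" if "y \<in> carrier G" for x y
  proof (rule shifts_zero_central[OF _ _ that])
    show "shifts (z x) (- (x * ((\<alpha> - 1) * 1)) + (\<alpha> - 1) * x)"
      unfolding z_def gamma_eq_delta by (intro shifts_mult shifts_inv shifts_int_pow shifts_delta)
  qed (simp add: algebra_simps)
  have prod: "delta x \<otimes> delta y = \<gamma> [^] (x + y) \<otimes> (z y \<otimes> z x)" for x y
  proof -
    have "delta x \<otimes> delta y = \<gamma> [^] x \<otimes> (z x \<otimes> (\<gamma> [^] y \<otimes> z y))"
      unfolding delta_eq[of x] delta_eq[of y] by (simp add: z_def m_assoc)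
    also have "\<dots> = \<gamma> [^] x \<otimes> (\<gamma> [^] y \<otimes> z y \<otimes> z x)"
      using z_central[of "\<gamma> [^] y \<otimes> z y" x] by (simp add: z_def)
    also have "\<dots> = \<gamma> [^] (x + y) \<otimes> (z y \<otimes> z x)"
      by (simp add: z_def m_assoc int_pow_mult)
    finally show ?thesis .
  qed
  have "z x \<otimes> z y = z y \<otimes> z x"
    using z_central[of "z y" x] by (simp add: z_def)
  then show ?thesis
    unfolding prod[of x y] prod[of y x] by (simp add: add.commute)
qed

lemma delta_add: "delta (x + y) = delta x \<otimes> delta y"
proof -
  have shift_add: "delta (u + (\<alpha> - 1) * v) = delta ((\<alpha> - 1) * v) \<otimes> delta u" for u v
  proof -
    have conj: "delta v \<otimes> elt i \<otimes> inv (delta v) = elt (i + (\<alpha> - 1) * v)" for i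
      using shifts_delta unfolding shifts_def by blast
    have "delta u = delta v \<otimes> delta u \<otimes> inv (delta v)"
      using delta_commute[of v u] by (simp add: m_assoc)
    also have "\<dots> = (delta v \<otimes> elt 0 \<otimes> inv (delta v)) \<otimes> inv (delta v \<otimes> elt u \<otimes> inv (delta v))"
      unfolding delta_def[of u] by (simp add: m_assoc inv_mult_group)
    also have "\<dots> = inv (delta ((\<alpha> - 1) * v)) \<otimes> delta (u + (\<alpha> - 1) * v)"
      unfolding conj elt_div_eq_delta by simp
    finally show ?thesis
      by (simp add: m_assoc)
  qed
  obtain \<beta> where \<beta>: "[(\<alpha> - 1) * \<beta> = 1] (mod p)"
    using alpha_minus_one_invertible by blast
  have y: "[(\<alpha> - 1) * (\<beta> * y) = y] (mod p)"
    using cong_mult[OF \<beta> cong_refl[of y]] by (simp add: mult.assoc)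
  have "delta (x + y) = delta (x + (\<alpha> - 1) * (\<beta> * y))"
    using y by (intro delta_cong cong_add cong_refl) (rule cong_sym)
  also have "\<dots> = delta y \<otimes> delta x"
    unfolding shift_add using delta_cong[OF y] by simp
  finally show ?thesis
    using delta_commute by simp
qed

lemma delta_eq_pow: "delta k = \<gamma> [^] k"
proof (induction k rule: int_induct[where k = 0])
  case base
  then show ?case by simp
next
  case (step1 i)
  then show ?case
    using delta_add[of i 1] by (simp add: gamma_eq_delta int_pow_mult)
next
  case (step2 i)
  have "delta i = delta (i - 1) \<otimes> \<gamma>"
    using delta_add[of "i - 1" 1] by (simp add: gamma_eq_delta)
  then have "delta (i - 1) = delta i \<otimes> inv \<gamma>"
    by (simp add: gamma_eq_delta m_assoc)
  then show ?case
    using step2.IH by (simp add: gamma_eq_delta int_pow_diff)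
qed

lemma elt_div_eq_pow: "elt a \<otimes> inv (elt b) = \<gamma> [^] (b - a)"
proof -
  have "delta b = delta a \<otimes> delta (b - a)"
    using delta_add[of a "b - a"] by simp
  then show ?thesis
    unfolding elt_div_eq_delta by (simp add: m_assoc delta_eq_pow)
qed

lemma gamma_pow_p: "\<gamma> [^] p = \<one>"
proof -
  have "elt p = elt 0"
    by (rule elt_cong) (simp add: cong_def)
  then show ?thesis
    using elt_div_eq_pow[of 0 p] by (simp only: diff_zero) simp
qed

lemma phi_in_carrier: "x \<in> {0..<p} \<Longrightarrow> \<phi> x \<in> carrier G"
  using phi_in_C C_subset_carrier by blast

lemma gamma_ne_one: "\<gamma> \<noteq> \<one>"
proof
  assume "\<gamma> = \<one>"
  have carrier: "\<phi> 0 \<in> carrier G" "\<phi> 1 \<in> carrier G"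
    using p_gt_1 by (simp_all add: phi_in_carrier)
  then have "\<phi> 0 = \<phi> 0 \<otimes> inv (\<phi> 1) \<otimes> \<phi> 1"
    by (simp add: m_assoc)
  also have "\<dots> = \<phi> 1"
    using \<open>\<gamma> = \<one>\<close> carrier unfolding gamma_def by simp
  finally have "\<phi> 0 = \<phi> 1" .
  moreover have "inj_on \<phi> {0..<p}"
    using aff_iso unfolding aff_rack_iso_def bij_betw_def by blast
  ultimately show False
    using p_gt_1 by (auto dest: inj_onD)
qed

lemma ord_gamma: "ord \<gamma> = nat p"
proof -
  have "int (ord \<gamma>) dvd int (nat p)"
    using gamma_pow_p int_pow_eq_id[of \<gamma> p] p_gt_1 by simp
  then have "ord \<gamma> dvd nat p"
    by (simp only: int_dvd_int_iff)
  moreover have "ord \<gamma> \<noteq> 1"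
    using ord_eq_1 gamma_ne_one by simp
  moreover have "Factorial_Ring.prime (nat p)"
    using p_prime prime_int_nat_transfer by blast
  ultimately show ?thesis
    unfolding prime_nat_iff by blast
qed

lemma gamma_pow_cong: "[a = b] (mod p) \<Longrightarrow> \<gamma> [^] a = \<gamma> [^] b"
  using int_pow_eq[of \<gamma> a b] ord_gamma p_gt_1 by (simp add: cong_iff_dvd_diff dvd_diff_commute)

lemma elt_conj_gamma: "elt x \<otimes> \<gamma> \<otimes> inv (elt x) = \<gamma> [^] \<alpha>"
proof -
  have "\<gamma> = elt 0 \<otimes> inv (elt 1)"
    using elt_div_eq_pow[of 0 1] by simp
  then have "elt x \<otimes> \<gamma> \<otimes> inv (elt x)
      = (elt x \<otimes> elt 0 \<otimes> inv (elt x)) \<otimes> inv (elt x \<otimes> elt 1 \<otimes> inv (elt x))"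
    by (simp add: m_assoc inv_mult_group)
  also have "\<dots> = \<gamma> [^] \<alpha>"
    unfolding elt_rack elt_div_eq_pow by simp
  finally show ?thesis .
qed

lemma elt_div_in_generate: "elt a \<otimes> inv (elt b) \<in> generate G {\<gamma>}"
  unfolding elt_div_eq_pow generate_pow[OF gamma_in_carrier] by blast

lemma conj_elt_div_in_generate:
  assumes "h \<in> carrier G"
  shows "h \<otimes> (elt a \<otimes> inv (elt b)) \<otimes> inv h \<in> generate G {\<gamma>}"
proof -
  obtain a' b' where "h \<otimes> elt a \<otimes> inv h = elt a'" "h \<otimes> elt b \<otimes> inv h = elt b'"
    using conj_elt[OF assms] by blast
  moreover have "h \<otimes> (elt a \<otimes> inv (elt b)) \<otimes> inv h
      = (h \<otimes> elt a \<otimes> inv h) \<otimes> inv (h \<otimes> elt b \<otimes> inv h)"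
    using assms by (simp add: m_assoc inv_mult_group)
  ultimately show ?thesis
    using elt_div_in_generate by simp
qed

lemma generate_gamma_normal: "generate G {\<gamma>} \<lhd> G"
proof (rule normal_invI[OF generate_is_subgroup])
  fix h n assume "h \<in> carrier G" "n \<in> generate G {\<gamma>}"
  moreover have "n \<in> generate G {\<gamma>} \<Longrightarrow> \<exists>k. n = elt 0 \<otimes> inv (elt k)"
    unfolding generate_pow[OF gamma_in_carrier] elt_div_eq_pow by auto
  ultimately show "h \<otimes> n \<otimes> inv h \<in> generate G {\<gamma>}"
    using conj_elt_div_in_generate by blast
qed simp

lemma derived_eq_generate_gamma: "derived G (carrier G) = generate G {\<gamma>}"
proof
  show "derived G (carrier G) \<subseteq> generate G {\<gamma>}"
  proof (rule derived_subset_normal[OF generate_gamma_normal C_subset_carrier C_generates])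
    fix c h assume "c \<in> C" "h \<in> carrier G"
    moreover obtain b where c: "c = elt b"
      using \<open>c \<in> C\<close> range_elt by blast
    ultimately obtain a where "h \<otimes> c \<otimes> inv h = elt a"
      using conj_elt by blast
    then show "h \<otimes> c \<otimes> inv h \<otimes> inv c \<in> generate G {\<gamma>}"
      unfolding c using elt_div_in_generate by simp
  qed
  have "\<phi> 0 \<in> C" "\<phi> 1 \<in> C"
    using p_gt_1 by (simp_all add: phi_in_C)
  then have "\<gamma> \<in> derived G (carrier G)"
    unfolding gamma_def using C_conj_class conj_class_div_in_derived by blast
  then show "generate G {\<gamma>} \<subseteq> derived G (carrier G)"
    by (intro generate_subgroup_incl derived_is_subgroup) auto
qed

lemma card_derived: "card (derived G (carrier G)) = nat p"
  unfolding derived_eq_generate_gamma generate_pow_card[OF gamma_in_carrier, symmetric] ord_gamma ..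

lemma phi_div_translation_invariant:
  assumes "x \<in> {0..<p}" "y \<in> {0..<p}"
  shows "\<phi> x \<otimes> inv (\<phi> y) = \<phi> ((x + z) mod p) \<otimes> inv (\<phi> ((y + z) mod p))"
proof -
  have "\<phi> x \<otimes> inv (\<phi> y) = \<gamma> [^] (y - x)"
    using assms elt_div_eq_pow[of x y] by (simp only: elt_eq_phi)
  also have "\<dots> = \<gamma> [^] ((y + z) - (x + z))"
    by simp
  also have "\<dots> = \<phi> ((x + z) mod p) \<otimes> inv (\<phi> ((y + z) mod p))"
    unfolding elt_div_eq_pow[symmetric] elt_def ..
  finally show ?thesis .
qed

lemma phi_div_eq_pow: "\<phi> 0 \<otimes> inv (\<phi> (int k mod p)) = \<gamma> [^] k"
proof -
  have "\<phi> 0 \<otimes> inv (\<phi> (int k mod p)) = \<gamma> [^] (int k - 0)"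
    unfolding elt_div_eq_pow[symmetric] elt_def using p_gt_1 by simp
  then show ?thesis
    by (simp add: int_pow_int)
qed

lemma phi_mult_gamma:
  assumes x: "x \<in> {0..<p}" and a: "a mod p = \<alpha> mod p"
  shows "\<phi> x \<otimes> \<gamma> = \<gamma> [^] a \<otimes> \<phi> x"
proof -
  have "[\<alpha> = a] (mod p)"
    using a by (simp add: cong_def)
  then have conj: "\<phi> x \<otimes> \<gamma> \<otimes> inv (\<phi> x) = \<gamma> [^] a"
    using elt_conj_gamma[of x] gamma_pow_cong[of \<alpha> a] elt_eq_phi[OF x] by simp
  have "\<phi> x \<otimes> \<gamma> = \<phi> x \<otimes> \<gamma> \<otimes> inv (\<phi> x) \<otimes> \<phi> x"
    using phi_in_carrier[OF x] by (simp add: m_assoc)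
  then show ?thesis
    unfolding conj .
qed

end

theorem mainTheorem4:
  fixes G (structure) and Xc :: "'a set" and p \<alpha> :: int and \<phi> :: "int \<Rightarrow> 'a"
  assumes grp: "group G"
    and conj: "\<exists>x\<in>carrier G. Xc = conj_class G x"
    and gen: "generate G Xc = carrier G"
    and prime: "Factorial_Ring.prime p"
    and alpha: "\<alpha> \<in> {0..<p} - {0, 1}"
    and iso: "aff_rack_iso G p \<alpha> \<phi> Xc"
  defines "\<gamma> \<equiv> \<phi> 0 \<otimes> inv (\<phi> 1)"
  shows "(\<forall>x\<in>{0..<p}. \<forall>y\<in>{0..<p}. \<forall>z\<in>{0..<p}.
            \<phi> x \<otimes> inv (\<phi> y) = \<phi> ((x + z) mod p) \<otimes> inv (\<phi> ((y + z) mod p)))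
       \<and> (\<forall>k::nat. \<phi> 0 \<otimes> inv (\<phi> (int k mod p)) = \<gamma> [^] k)
       \<and> (\<forall>x\<in>{0..<p}. \<forall>a::int. a mod p = \<alpha> mod p \<longrightarrow> \<phi> x \<otimes> \<gamma> = \<gamma> [^] a \<otimes> \<phi> x)
       \<and> derived G (carrier G) = generate G {\<gamma>}
       \<and> card (derived G (carrier G)) = nat p"
proof -
  interpret aff_conj_class G Xc p \<alpha> \<phi> \<gamma>
    unfolding aff_conj_class_def aff_conj_class_axioms_def \<gamma>_def
    using grp conj gen prime alpha iso by blast
  show ?thesis
    by (intro conjI ballI allI impI phi_div_translation_invariant phi_div_eq_pow phi_mult_gamma
        derived_eq_generate_gamma card_derived)
qed

end
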